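(* Let $P=(|P|,\preccurlyeq)$ be a finite poset, $S\subseteq|P|$ a chain, and $x,y$ two $\preccurlyeq$-incomparable elements of $|P|\setminus S$. Define $\preccurlyeq_{x,y}$ on $|P|$ by: $w\preccurlyeq_{x,y}z$ iff either $w\preccurlyeq z$, or ($w\preccurlyeq x$ and $y\preccurlyeq z$). Then the following are equivalent: (a) some $u\in|P|$ is $\preccurlyeq$-incomparable with at least one element of $S$ but $\preccurlyeq_{x,y}$-comparable with every element of $S$; (b) $x$ or $y$ is $\preccurlyeq$-incomparable with at least one element of $S$ but $\preccurlyeq_{x,y}$-comparable with every element of $S$; (c) $({\downarrow}x\cap S)\cup({\uparrow}y\cap S)=S$ but $({\downarrow}y\cap S)\cup({\uparrow}x\cap S)\ne S$.
   Context: For $z\in|P|$, ${\downarrow}z=\{w\in|P|: w\preccurlyeq z\}$ and ${\uparrow}z=\{w\in|P|: z\preccurlyeq w\}$. The relation $\preccurlyeq_{x,y}$ is the smallest partial ordering extending $\preccurlyeq$ in which $x\preccurlyeq_{x,y} y$. *)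

theory Defs
  imports Main
begin

definition partial_order_on_set :: "'a set \<Rightarrow> ('a \<Rightarrow> 'a \<Rightarrow> bool) \<Rightarrow> bool" where
  "partial_order_on_set P le \<longleftrightarrow>
     (\<forall>x\<in>P. le x x) \<and>
     (\<forall>x\<in>P. \<forall>y\<in>P. le x y \<and> le y x \<longrightarrow> x = y) \<and>
     (\<forall>x\<in>P. \<forall>y\<in>P. \<forall>z\<in>P. le x y \<and> le y z \<longrightarrow> le x z)"

definition comparable :: "('a \<Rightarrow> 'a \<Rightarrow> bool) \<Rightarrow> 'a \<Rightarrow> 'a \<Rightarrow> bool" where
  "comparable le a b \<longleftrightarrow> le a b \<or> le b a"

definition is_chain :: "'a set \<Rightarrow> ('a \<Rightarrow> 'a \<Rightarrow> bool) \<Rightarrow> 'a set \<Rightarrow> bool" where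
  "is_chain P le S \<longleftrightarrow> S \<subseteq> P \<and> (\<forall>a\<in>S. \<forall>b\<in>S. comparable le a b)"

definition le_xy :: "('a \<Rightarrow> 'a \<Rightarrow> bool) \<Rightarrow> 'a \<Rightarrow> 'a \<Rightarrow> 'a \<Rightarrow> 'a \<Rightarrow> bool" where
  "le_xy le x y w z \<longleftrightarrow> le w z \<or> (le w x \<and> le y z)"

definition down_set :: "'a set \<Rightarrow> ('a \<Rightarrow> 'a \<Rightarrow> bool) \<Rightarrow> 'a \<Rightarrow> 'a set" where
  "down_set P le z = {w\<in>P. le w z}"

definition up_set :: "'a set \<Rightarrow> ('a \<Rightarrow> 'a \<Rightarrow> bool) \<Rightarrow> 'a \<Rightarrow> 'a set" where
  "up_set P le z = {w\<in>P. le z w}"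

definition newly_comparable :: "('a \<Rightarrow> 'a \<Rightarrow> bool) \<Rightarrow> 'a \<Rightarrow> 'a \<Rightarrow> 'a set \<Rightarrow> 'a \<Rightarrow> bool" where
  "newly_comparable le x y S u \<longleftrightarrow>
     (\<exists>s\<in>S. \<not> comparable le u s) \<and> (\<forall>s\<in>S. comparable (le_xy le x y) u s)"

end

theory Submission
  imports Defs
begin

text \<open>If u becomes comparable with all of S although u \<parallel> s0 for some s0 \<in> S, the new
  relation must hold between u and s0 through the added pair, say u \<preccurlyeq> x and y \<preccurlyeq> s0
  (the other orientation is the same statement for the dual order with x and y exchanged).
  Then s0 lies neither in \<down>y nor in \<up>x, and every s \<in> S lies in \<down>x \<union> \<up>y: an s
  above u is (by the chain property and u \<parallel> s0) above s0, hence above y, and an s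
  below u is below x. Conversely, if S \<subseteq> \<down>x \<union> \<up>y and s0 \<in> S escapes \<down>y \<union> \<up>x,
  then s0 is incomparable with x or with y, and that endpoint is newly comparable
  with all of S.\<close>

definition splits_chain :: "('a \<Rightarrow> 'a \<Rightarrow> bool) \<Rightarrow> 'a \<Rightarrow> 'a \<Rightarrow> 'a set \<Rightarrow> bool" where
  "splits_chain le x y S \<longleftrightarrow>
     (\<forall>s\<in>S. le s x \<or> le y s) \<and> (\<exists>s\<in>S. \<not> le s y \<and> \<not> le x s)"

lemma splits_chain_iff_down_up_sets:
  assumes "S \<subseteq> P"
  shows "(down_set P le x \<inter> S) \<union> (up_set P le y \<inter> S) = S \<and>
         (down_set P le y \<inter> S) \<union> (up_set P le x \<inter> S) \<noteq> S \<longleftrightarrow> splits_chain le x y S"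
  using assms unfolding splits_chain_def down_set_def up_set_def by blast

lemma partial_order_on_set_converse:
  "partial_order_on_set P le \<Longrightarrow> partial_order_on_set P (\<lambda>a b. le b a)"
  unfolding partial_order_on_set_def by blast

lemma is_chain_converse: "is_chain P le S \<Longrightarrow> is_chain P (\<lambda>a b. le b a) S"
  unfolding is_chain_def comparable_def by blast

lemma splits_chain_converse: "splits_chain (\<lambda>a b. le b a) y x S \<longleftrightarrow> splits_chain le x y S"
  unfolding splits_chain_def by blast

lemma splits_chain_if_below_x_and_y_below:
  assumes po: "partial_order_on_set P le" and chain: "is_chain P le S"
    and "u \<in> P" "x \<in> P" "y \<in> P" "y \<notin> S"
    and s0: "s0 \<in> S" "\<not> comparable le u s0"
    and ux: "le u x" and ys0: "le y s0"
    and new: "\<forall>s\<in>S. comparable (le_xy le x y) u s"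
  shows "splits_chain le x y S"
proof -
  have SP: "S \<subseteq> P" using chain unfolding is_chain_def by blast
  have "s0 \<noteq> y" using s0 \<open>y \<notin> S\<close> by blast
  then have "\<not> le s0 y" using po ys0 s0 SP \<open>y \<in> P\<close> unfolding partial_order_on_set_def by blast
  moreover have "\<not> le x s0"
    using po ux s0 SP \<open>u \<in> P\<close> \<open>x \<in> P\<close> unfolding partial_order_on_set_def comparable_def by blast
  moreover have "le s x \<or> le y s" if sS: "s \<in> S" for s
  proof -
    have sP: "s \<in> P" using sS SP by blast
    consider "le u s" | "le s u" | "le s x \<or> le y s"
      using new sS unfolding comparable_def le_xy_def by blast
    then show ?thesis
    proof cases
      case 1
      then have "\<not> le s s0"
        using po s0 SP sP \<open>u \<in> P\<close> unfolding partial_order_on_set_def comparable_def by blast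
      then have "le s0 s" using chain sS s0 unfolding is_chain_def comparable_def by blast
      then show ?thesis using po ys0 s0 SP sP \<open>y \<in> P\<close> unfolding partial_order_on_set_def by blast
    next
      case 2
      then show ?thesis using po ux sP \<open>u \<in> P\<close> \<open>x \<in> P\<close> unfolding partial_order_on_set_def by blast
    qed
  qed
  ultimately show ?thesis unfolding splits_chain_def using s0 by blast
qed

lemma splits_chain_if_newly_comparable:
  assumes po: "partial_order_on_set P le" and chain: "is_chain P le S"
    and x: "x \<in> P - S" and y: "y \<in> P - S" and u: "u \<in> P"
    and "newly_comparable le x y S u"
  shows "splits_chain le x y S"
proof -
  obtain s0 where s0: "s0 \<in> S" "\<not> comparable le u s0"
    and new: "\<forall>s\<in>S. comparable (le_xy le x y) u s"
    using assms(6) unfolding newly_comparable_def by blast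
  then have "(le u x \<and> le y s0) \<or> (le s0 x \<and> le y u)"
    unfolding comparable_def le_xy_def by blast
  then show ?thesis
  proof
    assume "le u x \<and> le y s0"
    with x y show ?thesis
      by (intro splits_chain_if_below_x_and_y_below[OF po chain u _ _ _ s0 _ _ new]) auto
  next
    assume "le s0 x \<and> le y u"
    moreover have "\<not> comparable (\<lambda>a b. le b a) u s0"
      using s0(2) unfolding comparable_def by blast
    moreover have "\<forall>s\<in>S. comparable (le_xy (\<lambda>a b. le b a) y x) u s"
      using new unfolding comparable_def le_xy_def by blast
    ultimately have "splits_chain (\<lambda>a b. le b a) y x S"
      using x y
      by (intro splits_chain_if_below_x_and_y_below
          [OF partial_order_on_set_converse[OF po] is_chain_converse[OF chain] u _ _ _ s0(1)]) auto
    then show ?thesis by (rule splits_chain_converse[THEN iffD1])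
  qed
qed

lemma newly_comparable_endpoint_if_splits_chain:
  assumes po: "partial_order_on_set P le"
    and "x \<in> P" "y \<in> P" "\<not> le y x"
    and "S \<subseteq> P" and "splits_chain le x y S"
  shows "newly_comparable le x y S x \<or> newly_comparable le x y S y"
proof -
  obtain s0 where s0: "s0 \<in> S" "\<not> le s0 y" "\<not> le x s0"
    and cover: "\<forall>s\<in>S. le s x \<or> le y s"
    using assms(6) unfolding splits_chain_def by blast
  have "le x x" "le y y" using po \<open>x \<in> P\<close> \<open>y \<in> P\<close> unfolding partial_order_on_set_def by blast+
  then have "\<forall>s\<in>S. comparable (le_xy le x y) x s" "\<forall>s\<in>S. comparable (le_xy le x y) y s"
    using cover unfolding comparable_def le_xy_def by blast+
  moreover have "\<not> comparable le x s0 \<or> \<not> comparable le y s0"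
  proof (cases "le s0 x")
    case True
    have "s0 \<in> P" using assms(5) s0(1) by blast
    then have "\<not> le y s0"
      using po True assms(4) \<open>x \<in> P\<close> \<open>y \<in> P\<close> unfolding partial_order_on_set_def by blast
    then show ?thesis using s0 unfolding comparable_def by blast
  next
    case False
    then show ?thesis using s0 unfolding comparable_def by blast
  qed
  ultimately show ?thesis unfolding newly_comparable_def using s0(1) by blast
qed

theorem corollary7p1:
  fixes P :: "'a set" and le :: "'a \<Rightarrow> 'a \<Rightarrow> bool" and S :: "'a set" and x y :: 'a
  assumes "finite P"
    and "partial_order_on_set P le"
    and "is_chain P le S"
    and "x \<in> P - S" and "y \<in> P - S"
    and "\<not> comparable le x y"
  shows "((\<exists>u\<in>P. newly_comparable le x y S u) \<longleftrightarrow>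
            (newly_comparable le x y S x \<or> newly_comparable le x y S y))
       \<and> ((newly_comparable le x y S x \<or> newly_comparable le x y S y) \<longleftrightarrow>
            ((down_set P le x \<inter> S) \<union> (up_set P le y \<inter> S) = S \<and>
             (down_set P le y \<inter> S) \<union> (up_set P le x \<inter> S) \<noteq> S))"
proof -
  have "S \<subseteq> P" using assms(3) unfolding is_chain_def by blast
  have "\<not> le y x" using assms(6) unfolding comparable_def by blast
  have newly_imp_splits: "splits_chain le x y S" if "u \<in> P" "newly_comparable le x y S u" for u
    using splits_chain_if_newly_comparable[OF assms(2-5) that] .
  have splits_imp_endpoint: "newly_comparable le x y S x \<or> newly_comparable le x y S y"
    if "splits_chain le x y S"
    using newly_comparable_endpoint_if_splits_chain[OF assms(2) _ _ \<open>\<not> le y x\<close> \<open>S \<subseteq> P\<close> that]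
      assms(4,5) by blast
  show ?thesis
    using newly_imp_splits splits_imp_endpoint splits_chain_iff_down_up_sets[OF \<open>S \<subseteq> P\<close>] assms(4,5)
    by blast
qed

end
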